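(* Let $h>0$, $T>0$, and let $u_h$ be the solution of the semi-discrete scheme with initial value $u_h(0)=u_{0,h}\in V_h$ (arbitrary). Then for all $t\in[0,T]$, $\|u_h(t)\|_{\mathbb L^2}^2+\int_0^t\|\Delta u_h(s)\|_{\mathbb L^2}^2\,ds+\int_0^t\|u_h(s)\|_{\mathbb L^4}^4\,ds\le C\|u_h(0)\|_{\mathbb L^2}^2$, where $C$ depends on $T$ (and the coefficients) but not on $h$.
   Context: $\Omega\subset\mathbb R^d$, $d\in\{1,2,3\}$, bounded domain with boundary regular enough that $\|v\|_{\mathbb H^2}\le C(\|v\|_{\mathbb L^2}+\|\Delta v\|_{\mathbb L^2})$ for $v\in\mathbb H^2_{\boldsymbol n}$. $\mathbb L^p,\mathbb W^{m,p},\mathbb H^m$: spaces of functions $\Omega\to\mathbb R^3$; $\langle\cdot,\cdot\rangle$ the $L^2$ inner product; $\mathbb H^2_{\boldsymbol n}=\{v\in\mathbb H^2:\partial_{\boldsymbol n}v=0\}$. Constants $\beta_1\in\mathbb R$, $\beta_2,\beta_3>0$, $\beta_4,\beta_5,\beta_6\ge0$. Forms: $\mathcal B(\phi,\eta;v,w)=\beta_3\langle(\phi\cdot\eta)v,w\rangle+\beta_5\langle(\phi\cdot\eta)\nabla v,\nabla w\rangle+\beta_5\langle\eta(\phi\cdot\nabla v),\nabla w\rangle+\beta_5\langle\phi(\eta\cdot\nabla v),\nabla w\rangle$, $\mathcal C(\eta;v,w)=-\beta_4\langle\eta\times\nabla v,\nabla w\rangle$, $\mathcal A(\phi;v,w)=\alpha\langle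 v,w\rangle+\beta_1\langle\nabla v,\nabla w\rangle+\beta_2\langle\Delta v,\Delta w\rangle+\mathcal B(\phi,\phi;v,w)+\mathcal C(\phi;v,w)$, with $\alpha>0$ fixed ($\alpha>\beta_1^2/\beta_2$ if $\beta_1<0$). Let $\boldsymbol j\in L^\infty(\Omega;\mathbb R^d)$ with $\nabla\cdot\boldsymbol j=0$ in $\Omega$, $\boldsymbol j\cdot\boldsymbol n=0$ on $\partial\Omega$, $\|\boldsymbol j\|_{L^\infty}=1$. $r=3$ if $d\le2$, $r=9$ if $d=3$. $\mathcal T_h$ is a shape-regular triangulation of $\Omega$ of mesh size $h$ and $V_h\subset\mathbb H^2_{\boldsymbol n}\cap C^1(\overline\Omega)$ is a $C^1$-conforming finite element space of piecewise polynomials of degree $r$ on $\mathcal T_h$ (e.g. cubic Hermite in 1D, Hsieh–Clough–Tocher in 2D). Semi-discrete scheme: $u_h:[0,T]\to V_h$ with $\langle\partial_tu_h,\chi\rangle+\mathcal A(u_h;u_h,\chi)-(\alpha+\beta_3)\langle u_h,\chi\rangle-\beta_6\langle(\boldsymbol j\cdot\nabla)u_h,\chi\rangle=0$ for all $\chi\in V_h$, $t\in[0,T]$. *)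

theory Defs
  imports "HOL-Analysis.Analysis" "HOL-Analysis.Cross3" "HOL-Probability.Essential_Supremum"
begin

definition pdiff :: "(real^'n \<Rightarrow> real) \<Rightarrow> 'n \<Rightarrow> real^'n \<Rightarrow> real" where
  "pdiff \<phi> i x = deriv (\<lambda>t. \<phi> (x + t *\<^sub>R axis i 1)) 0"

text \<open>C-infinity: belongs to a family of continuous functions closed under taking
  (existing) partial derivatives in every coordinate direction.\<close>
definition smooth_fun :: "(real^'n \<Rightarrow> real) \<Rightarrow> bool" where
  "smooth_fun \<phi> \<longleftrightarrow> (\<exists>F. \<phi> \<in> F \<and> (\<forall>f\<in>F. continuous_on UNIV f \<and>
      (\<forall>i. \<exists>g\<in>F. \<forall>x. ((\<lambda>t. f (x + t *\<^sub>R axis i 1)) has_real_derivative g x) (at 0))))"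

definition test_fun :: "(real^'n) set \<Rightarrow> (real^'n \<Rightarrow> real) \<Rightarrow> bool" where
  "test_fun \<Omega> \<phi> \<longleftrightarrow> smooth_fun \<phi> \<and> compact (closure {x. \<phi> x \<noteq> 0})
      \<and> closure {x. \<phi> x \<noteq> 0} \<subseteq> \<Omega>"

definition loc_integrable :: "(real^'n) set \<Rightarrow> (real^'n \<Rightarrow> 'b::euclidean_space) \<Rightarrow> bool" where
  "loc_integrable \<Omega> f \<longleftrightarrow> (\<forall>K. compact K \<and> K \<subseteq> \<Omega> \<longrightarrow> set_integrable lebesgue K f)"

definition weak_pd :: "(real^'n) set \<Rightarrow> 'n \<Rightarrow> (real^'n \<Rightarrow> 'b::euclidean_space) \<Rightarrow> (real^'n \<Rightarrow> 'b) \<Rightarrow> bool" where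
  "weak_pd \<Omega> i f g \<longleftrightarrow> loc_integrable \<Omega> f \<and> loc_integrable \<Omega> g \<and>
     (\<forall>\<phi>. test_fun \<Omega> \<phi> \<longrightarrow>
        (LINT x:\<Omega>|lebesgue. pdiff \<phi> i x *\<^sub>R f x) = - (LINT x:\<Omega>|lebesgue. \<phi> x *\<^sub>R g x))"

text \<open>The weak partial derivative (a representative; unique up to null sets).\<close>
definition wd :: "(real^'n) set \<Rightarrow> 'n \<Rightarrow> (real^'n \<Rightarrow> 'b::euclidean_space) \<Rightarrow> (real^'n \<Rightarrow> 'b)" where
  "wd \<Omega> i f = (SOME g. weak_pd \<Omega> i f g)"

definition L2 :: "(real^'n) set \<Rightarrow> (real^'n \<Rightarrow> 'b::euclidean_space) \<Rightarrow> bool" where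
  "L2 \<Omega> f \<longleftrightarrow> set_borel_measurable lebesgue \<Omega> f \<and> set_integrable lebesgue \<Omega> (\<lambda>x. norm (f x) ^ 2)"

definition H1 :: "(real^'n) set \<Rightarrow> (real^'n \<Rightarrow> 'b::euclidean_space) \<Rightarrow> bool" where
  "H1 \<Omega> f \<longleftrightarrow> L2 \<Omega> f \<and> (\<forall>i. weak_pd \<Omega> i f (wd \<Omega> i f) \<and> L2 \<Omega> (wd \<Omega> i f))"

definition H2 :: "(real^'n) set \<Rightarrow> (real^'n \<Rightarrow> 'b::euclidean_space) \<Rightarrow> bool" where
  "H2 \<Omega> f \<longleftrightarrow> H1 \<Omega> f \<and> (\<forall>i. H1 \<Omega> (wd \<Omega> i f))"

definition l2ip :: "(real^'n) set \<Rightarrow> (real^'n \<Rightarrow> 'b::euclidean_space) \<Rightarrow> (real^'n \<Rightarrow> 'b) \<Rightarrow> real" where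
  "l2ip \<Omega> f g = (LINT x:\<Omega>|lebesgue. f x \<bullet> g x)"

definition l2norm_sq :: "(real^'n) set \<Rightarrow> (real^'n \<Rightarrow> 'b::euclidean_space) \<Rightarrow> real" where
  "l2norm_sq \<Omega> f = (LINT x:\<Omega>|lebesgue. norm (f x) ^ 2)"

definition l4norm_pow4 :: "(real^'n) set \<Rightarrow> (real^'n \<Rightarrow> 'b::euclidean_space) \<Rightarrow> real" where
  "l4norm_pow4 \<Omega> f = (LINT x:\<Omega>|lebesgue. norm (f x) ^ 4)"

definition h2norm :: "(real^'n) set \<Rightarrow> (real^'n \<Rightarrow> 'b::euclidean_space) \<Rightarrow> real" where
  "h2norm \<Omega> f = sqrt (l2norm_sq \<Omega> f + (\<Sum>i\<in>UNIV. l2norm_sq \<Omega> (wd \<Omega> i f))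
       + (\<Sum>i\<in>UNIV. \<Sum>k\<in>UNIV. l2norm_sq \<Omega> (wd \<Omega> k (wd \<Omega> i f))))"

definition lap :: "(real^'n) set \<Rightarrow> (real^'n \<Rightarrow> 'b::euclidean_space) \<Rightarrow> (real^'n \<Rightarrow> 'b)" where
  "lap \<Omega> f = (\<lambda>x. \<Sum>i\<in>UNIV. wd \<Omega> i (wd \<Omega> i f) x)"

definition gradip :: "(real^'n) set \<Rightarrow> (real^'n \<Rightarrow> 'b::euclidean_space) \<Rightarrow> (real^'n \<Rightarrow> 'b) \<Rightarrow> real" where
  "gradip \<Omega> f g = (\<Sum>i\<in>UNIV. l2ip \<Omega> (wd \<Omega> i f) (wd \<Omega> i g))"

text \<open>H^2_n: H^2 functions with vanishing normal derivative on the boundary, the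
  normal derivative being understood in the weak (Green's formula) sense:
  \<langle>\<Delta>v,\<psi>\<rangle> + \<langle>\<nabla>v,\<nabla>\<psi>\<rangle> = \<integral>_{\<partial>\<Omega>} \<partial>_n v \<psi> = 0 for all \<psi> \<in> H^1.\<close>
definition H2n :: "(real^'n) set \<Rightarrow> (real^'n \<Rightarrow> real^3) \<Rightarrow> bool" where
  "H2n \<Omega> v \<longleftrightarrow> H2 \<Omega> v \<and>
     (\<forall>\<psi>::real^'n \<Rightarrow> real^3. H1 \<Omega> \<psi> \<longrightarrow> l2ip \<Omega> (lap \<Omega> v) \<psi> + gradip \<Omega> v \<psi> = 0)"

definition bounded_domain :: "(real^'n) set \<Rightarrow> bool" where
  "bounded_domain \<Omega> \<longleftrightarrow> open \<Omega> \<and> connected \<Omega> \<and> bounded \<Omega> \<and> \<Omega> \<noteq> {}"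

definition H2_regular :: "(real^'n) set \<Rightarrow> bool" where
  "H2_regular \<Omega> \<longleftrightarrow> (\<exists>C. \<forall>v. H2n \<Omega> v \<longrightarrow>
      h2norm \<Omega> v \<le> C * (sqrt (l2norm_sq \<Omega> v) + sqrt (l2norm_sq \<Omega> (lap \<Omega> v))))"

text \<open>j \<in> L^\<infinity>(\<Omega>;R^d), \<parallel>j\<parallel>_\<infinity> = 1, div j = 0 in \<Omega> and j\<cdot>n = 0 on \<partial>\<Omega>, the latter
  two in the weak sense: \<integral>_\<Omega> j\<cdot>\<nabla>\<phi> = 0 for all \<phi> \<in> H^1(\<Omega>).\<close>
definition admissible_field :: "(real^'n) set \<Rightarrow> (real^'n \<Rightarrow> real^'n) \<Rightarrow> bool" where
  "admissible_field \<Omega> j \<longleftrightarrow>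
     esssup (lebesgue_on \<Omega>) (\<lambda>x. ereal (norm (j x))) = 1 \<and>
     (\<forall>\<phi>::real^'n \<Rightarrow> real. H1 \<Omega> \<phi> \<longrightarrow>
        (LINT x:\<Omega>|lebesgue. (\<Sum>i\<in>UNIV. j x $ i * wd \<Omega> i \<phi> x)) = 0)"

definition d_simplex :: "(real^'n) set \<Rightarrow> bool" where
  "d_simplex K \<longleftrightarrow> (\<exists>S. finite S \<and> card S = CARD('n) + 1 \<and> \<not> affine_dependent S \<and> K = convex hull S)"

definition triangulation :: "(real^'n) set \<Rightarrow> (real^'n) set set \<Rightarrow> bool" where
  "triangulation \<Omega> Th \<longleftrightarrow> finite Th \<and> Th \<noteq> {} \<and> (\<forall>K\<in>Th. d_simplex K) \<and> \<Union>Th = closure \<Omega> \<and>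
     (\<forall>K\<in>Th. \<forall>K'\<in>Th. K \<noteq> K' \<longrightarrow> (K \<inter> K') face_of K \<and> (K \<inter> K') face_of K')"

definition meshsize :: "(real^'n) set set \<Rightarrow> real" where
  "meshsize Th = Max (diameter ` Th)"

definition shape_regular :: "real \<Rightarrow> (real^'n) set set \<Rightarrow> bool" where
  "shape_regular \<sigma> Th \<longleftrightarrow> (\<forall>K\<in>Th. diameter K \<le> \<sigma> * Sup {\<rho>. \<exists>x. ball x \<rho> \<subseteq> K})"

definition poly_le :: "nat \<Rightarrow> (real^'n \<Rightarrow> real^3) \<Rightarrow> bool" where
  "poly_le r p \<longleftrightarrow> (\<exists>c :: ('n \<Rightarrow> nat) \<Rightarrow> real^3. \<forall>x.
      p x = (\<Sum>\<alpha>\<in>{\<alpha>. sum \<alpha> UNIV \<le> r}. (\<Prod>i\<in>UNIV. (x $ i) ^ \<alpha> i) *\<^sub>R c \<alpha>))"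

text \<open>Piecewise polynomial of degree r on Th (allowing a subdivision of each
  element into sub-simplices, as for Hsieh-Clough-Tocher elements).\<close>
definition piecewise_poly :: "nat \<Rightarrow> (real^'n) set set \<Rightarrow> (real^'n \<Rightarrow> real^3) \<Rightarrow> bool" where
  "piecewise_poly r Th v \<longleftrightarrow> (\<forall>K\<in>Th. \<exists>P. finite P \<and> \<Union>P = K \<and>
      (\<forall>S\<in>P. d_simplex S \<and> (\<exists>p. poly_le r p \<and> (\<forall>x\<in>S. v x = p x))))"

definition C1_closure :: "(real^'n) set \<Rightarrow> (real^'n \<Rightarrow> real^3) \<Rightarrow> bool" where
  "C1_closure \<Omega> v \<longleftrightarrow> (\<exists>g :: 'n \<Rightarrow> real^'n \<Rightarrow> real^3.
      continuous_on (closure \<Omega>) v \<and> (\<forall>i. continuous_on (closure \<Omega>) (g i)) \<and>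
      (\<forall>x\<in>\<Omega>. (v has_derivative (\<lambda>y. \<Sum>i\<in>UNIV. y $ i *\<^sub>R g i x)) (at x)))"

definition fe_degree :: "'n itself \<Rightarrow> nat" where
  "fe_degree _ = (if CARD('n) \<le> 2 then 3 else 9)"

definition fe_space :: "(real^'n) set \<Rightarrow> (real^'n) set set \<Rightarrow> (real^'n \<Rightarrow> real^3) set \<Rightarrow> bool" where
  "fe_space \<Omega> Th V \<longleftrightarrow>
     (\<lambda>x. 0) \<in> V \<and> (\<forall>v\<in>V. \<forall>w\<in>V. (\<lambda>x. v x + w x) \<in> V) \<and> (\<forall>c. \<forall>v\<in>V. (\<lambda>x. c *\<^sub>R v x) \<in> V) \<and>
     (\<exists>B. finite B \<and> B \<subseteq> V \<and> (\<forall>v\<in>V. \<exists>c. v = (\<lambda>x. \<Sum>b\<in>B. c b *\<^sub>R b x))) \<and>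
     (\<forall>v\<in>V. H2n \<Omega> v \<and> C1_closure \<Omega> v \<and> piecewise_poly (fe_degree TYPE('n)) Th v)"

definition Bform :: "(real^'n) set \<Rightarrow> real \<Rightarrow> real \<Rightarrow> (real^'n \<Rightarrow> real^3) \<Rightarrow> (real^'n \<Rightarrow> real^3)
    \<Rightarrow> (real^'n \<Rightarrow> real^3) \<Rightarrow> (real^'n \<Rightarrow> real^3) \<Rightarrow> real" where
  "Bform \<Omega> \<beta>3 \<beta>5 \<phi> \<eta> v w =
     \<beta>3 * (LINT x:\<Omega>|lebesgue. (\<phi> x \<bullet> \<eta> x) * (v x \<bullet> w x))
   + \<beta>5 * (LINT x:\<Omega>|lebesgue. (\<phi> x \<bullet> \<eta> x) * (\<Sum>i\<in>UNIV. wd \<Omega> i v x \<bullet> wd \<Omega> i w x))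
   + \<beta>5 * (LINT x:\<Omega>|lebesgue. \<Sum>i\<in>UNIV. (\<phi> x \<bullet> wd \<Omega> i v x) * (\<eta> x \<bullet> wd \<Omega> i w x))
   + \<beta>5 * (LINT x:\<Omega>|lebesgue. \<Sum>i\<in>UNIV. (\<eta> x \<bullet> wd \<Omega> i v x) * (\<phi> x \<bullet> wd \<Omega> i w x))"

definition Cform :: "(real^'n) set \<Rightarrow> real \<Rightarrow> (real^'n \<Rightarrow> real^3)
    \<Rightarrow> (real^'n \<Rightarrow> real^3) \<Rightarrow> (real^'n \<Rightarrow> real^3) \<Rightarrow> real" where
  "Cform \<Omega> \<beta>4 \<eta> v w = - \<beta>4 * (\<Sum>i\<in>UNIV. LINT x:\<Omega>|lebesgue. (cross3 (\<eta> x) (wd \<Omega> i v x)) \<bullet> wd \<Omega> i w x)"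

definition Aform :: "(real^'n) set \<Rightarrow> real \<Rightarrow> real \<Rightarrow> real \<Rightarrow> real \<Rightarrow> real \<Rightarrow> real \<Rightarrow>
    (real^'n \<Rightarrow> real^3) \<Rightarrow> (real^'n \<Rightarrow> real^3) \<Rightarrow> (real^'n \<Rightarrow> real^3) \<Rightarrow> real" where
  "Aform \<Omega> \<alpha> \<beta>1 \<beta>2 \<beta>3 \<beta>4 \<beta>5 \<phi> v w =
     \<alpha> * l2ip \<Omega> v w + \<beta>1 * gradip \<Omega> v w + \<beta>2 * l2ip \<Omega> (lap \<Omega> v) (lap \<Omega> w)
   + Bform \<Omega> \<beta>3 \<beta>5 \<phi> \<phi> v w + Cform \<Omega> \<beta>4 \<phi> v w"

definition transport :: "(real^'n) set \<Rightarrow> (real^'n \<Rightarrow> real^'n) \<Rightarrow> (real^'n \<Rightarrow> real^3) \<Rightarrow> (real^'n \<Rightarrow> real^3) \<Rightarrow> real" where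
  "transport \<Omega> j v w = (LINT x:\<Omega>|lebesgue. \<Sum>i\<in>UNIV. j x $ i * (wd \<Omega> i v x \<bullet> w x))"

definition semidiscrete_solution :: "(real^'n) set \<Rightarrow> (real^'n \<Rightarrow> real^'n) \<Rightarrow>
    real \<Rightarrow> real \<Rightarrow> real \<Rightarrow> real \<Rightarrow> real \<Rightarrow> real \<Rightarrow> real \<Rightarrow> real \<Rightarrow> (real^'n \<Rightarrow> real^3) set \<Rightarrow>
    (real \<Rightarrow> real^'n \<Rightarrow> real^3) \<Rightarrow> (real \<Rightarrow> real^'n \<Rightarrow> real^3) \<Rightarrow> bool" where
  "semidiscrete_solution \<Omega> j \<alpha> \<beta>1 \<beta>2 \<beta>3 \<beta>4 \<beta>5 \<beta>6 T V u u' \<longleftrightarrow>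
     (\<forall>t\<in>{0..T}. u t \<in> V \<and> u' t \<in> V \<and>
        (\<forall>x\<in>\<Omega>. ((\<lambda>s. u s x) has_vector_derivative u' t x) (at t within {0..T})) \<and>
        (\<forall>w\<in>V. l2ip \<Omega> (u' t) w + Aform \<Omega> \<alpha> \<beta>1 \<beta>2 \<beta>3 \<beta>4 \<beta>5 (u t) (u t) w
                 - (\<alpha> + \<beta>3) * l2ip \<Omega> (u t) w - \<beta>6 * transport \<Omega> j (u t) w = 0))"

end

theory Submission
  imports Defs "HOL-Library.Function_Algebras"
begin

text \<open>Testing the scheme with \<open>\<chi> = u\<^sub>h\<close>: the term \<open>\<alpha>\<langle>u,u\<rangle>\<close> cancels, the skew form \<open>\<C>\<close> vanishes,
  \<open>\<B>(u,u;u,u) \<ge> \<beta>\<^sub>3\<parallel>u\<parallel>\<^sup>4\<^sub>L\<^sub>4\<close>, Green's formula and Young's inequality absorb the gradient term into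
  the biharmonic one, and \<open>\<parallel>j\<parallel>\<^sub>\<infinity> \<le> 1\<close> bounds the transport term. This gives
  \<open>d/dt \<parallel>u\<parallel>\<^sup>2 + \<beta>\<^sub>2\<parallel>\<Delta>u\<parallel>\<^sup>2 + 2\<beta>\<^sub>3\<parallel>u\<parallel>\<^sup>4\<^sub>L\<^sub>4 \<le> K\<parallel>u\<parallel>\<^sup>2\<close> with \<open>K\<close> depending only on the
  coefficients and the dimension, never on the mesh, and Gronwall's lemma concludes. The scheme
  only provides pointwise time derivatives; that \<open>\<parallel>u\<^sub>h\<parallel>\<^sup>2\<close> is differentiable comes from the fact
  that on the finite-dimensional space \<open>V\<^sub>h\<close> the \<open>L\<^sup>2\<close> norm is dominated by finitely many point
  values.\<close>

section \<open>Finite-dimensional spaces of functions\<close>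

definition fscale :: "real \<Rightarrow> ('a \<Rightarrow> 'b::real_vector) \<Rightarrow> ('a \<Rightarrow> 'b)" where
  "fscale c f = (\<lambda>x. c *\<^sub>R f x)"

interpretation fun_vec: vector_space "fscale :: real \<Rightarrow> ('a \<Rightarrow> 'b::real_vector) \<Rightarrow> ('a \<Rightarrow> 'b)"
  by unfold_locales (auto simp: fscale_def fun_eq_iff scaleR_add_right scaleR_add_left)

lemma sum_fun_apply: "finite A \<Longrightarrow> (sum f A :: 'a \<Rightarrow> 'b::comm_monoid_add) x = (\<Sum>a\<in>A. f a x)"
  by (induction A rule: finite_induct) auto

lemma fun_vec_dim_less:
  fixes W W1 :: "('a \<Rightarrow> 'b::real_vector) set"
  assumes "fun_vec.subspace W1" "W1 \<subseteq> W" "w \<in> W" "w \<notin> W1" "W \<subseteq> fun_vec.span B" "finite B"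
  shows "fun_vec.dim W1 < fun_vec.dim W"
proof -
  obtain B1 where B1: "B1 \<subseteq> W1" "fun_vec.independent B1" "W1 \<subseteq> fun_vec.span B1"
      "card B1 = fun_vec.dim W1"
    using fun_vec.basis_exists by blast
  obtain B2 where B2: "B2 \<subseteq> W" "fun_vec.independent B2" "W \<subseteq> fun_vec.span B2"
      "card B2 = fun_vec.dim W"
    using fun_vec.basis_exists by blast
  have "finite B2"
    using fun_vec.independent_span_bound[OF assms(6) B2(2)] B2(1) assms(5) by auto
  have "fun_vec.span B1 \<subseteq> W1" using fun_vec.span_minimal[OF B1(1) assms(1)] .
  then have w: "w \<notin> fun_vec.span B1" using assms(4) by blast
  have ind: "fun_vec.independent (insert w B1)" using fun_vec.independent_insertI[OF w B1(2)] .
  have "insert w B1 \<subseteq> fun_vec.span B2" using B1(1) assms(2,3) B2(3) by blast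
  from fun_vec.independent_span_bound[OF \<open>finite B2\<close> ind this]
  have "finite (insert w B1)" "card (insert w B1) \<le> card B2" by auto
  moreover have "w \<notin> B1" using w fun_vec.span_base by blast
  ultimately show ?thesis using B1(4) B2(4) by auto
qed

lemma square_add_le: "(a + b)^2 \<le> 2 * a^2 + 2 * (b::real)^2"
  using zero_le_power2[of "a - b"] by (simp add: power2_eq_square algebra_simps)

text \<open>The induction step of \<open>point_values_dominate\<close>: splitting off the direction of \<open>w\<close>
  along the functional \<open>v \<mapsto> v x\<^sub>0 \<bullet> w x\<^sub>0\<close> adds the single point \<open>x\<^sub>0\<close>.\<close>

lemma point_values_dominate_step:
  fixes N :: "('a \<Rightarrow> 'b::real_inner) \<Rightarrow> real"
  assumes W: "fun_vec.subspace W"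
    and N_add: "\<And>f g. f \<in> W \<Longrightarrow> g \<in> W \<Longrightarrow> N (f + g) \<le> 2 * N f + 2 * N g"
    and N_scale: "\<And>c f. f \<in> W \<Longrightarrow> N (fscale c f) = c^2 * N f"
    and N_nonneg: "\<And>f. f \<in> W \<Longrightarrow> N f \<ge> 0"
    and w: "w \<in> W" "w x\<^sub>0 \<noteq> 0"
    and X: "finite X" "M \<ge> 0"
    and bound: "\<And>v. v \<in> W \<Longrightarrow> v x\<^sub>0 \<bullet> w x\<^sub>0 = 0 \<Longrightarrow> N v \<le> M * (\<Sum>x\<in>X. norm (v x)^2)"
  shows "\<exists>M'\<ge>0. \<forall>v\<in>W. N v \<le> M' * (\<Sum>x\<in>insert x\<^sub>0 X. norm (v x)^2)"
proof -
  define c where "c = norm (w x\<^sub>0)^2"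
  define A where "A = 4 * M * (\<Sum>x\<in>X. norm (w x)^2) + 2 * N w"
  have c: "c > 0" using w(2) by (simp add: c_def)
  have A: "A \<ge> 0" using X N_nonneg[OF w(1)] by (auto simp: A_def intro!: sum_nonneg add_nonneg_nonneg mult_nonneg_nonneg)
  have "N v \<le> (4 * M + A / c) * (\<Sum>x\<in>insert x\<^sub>0 X. norm (v x)^2)" if v: "v \<in> W" for v
  proof -
    define l where "l = (v x\<^sub>0 \<bullet> w x\<^sub>0) / c"
    define v1 where "v1 = v + fscale (- l) w"
    define S where "S = (\<Sum>x\<in>insert x\<^sub>0 X. norm (v x)^2)"
    have v1: "v1 \<in> W" "fscale l w \<in> W"
      unfolding v1_def using W v w(1) by (blast intro: fun_vec.subspace_add fun_vec.subspace_scale)+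
    have "v1 x\<^sub>0 \<bullet> w x\<^sub>0 = 0"
      using c unfolding v1_def fscale_def l_def c_def power2_norm_eq_inner by (simp add: inner_diff_left)
    then have N_v1: "N v1 \<le> M * (\<Sum>x\<in>X. norm (v1 x)^2)" using bound v1(1) by blast
    have "norm (v1 x)^2 \<le> 2 * norm (v x)^2 + 2 * l^2 * norm (w x)^2" for x
    proof -
      have "norm (v1 x) \<le> norm (v x) + \<bar>l\<bar> * norm (w x)"
        using norm_triangle_ineq[of "v x" "(- l) *\<^sub>R w x"] by (simp add: v1_def fscale_def)
      then have "norm (v1 x)^2 \<le> (norm (v x) + \<bar>l\<bar> * norm (w x))^2" by (simp add: power_mono)
      also have "\<dots> \<le> 2 * norm (v x)^2 + 2 * l^2 * norm (w x)^2"
        using square_add_le[of "norm (v x)" "\<bar>l\<bar> * norm (w x)"] by (simp add: power_mult_distrib)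
      finally show ?thesis .
    qed
    then have "(\<Sum>x\<in>X. norm (v1 x)^2) \<le> (\<Sum>x\<in>X. 2 * norm (v x)^2 + 2 * l^2 * norm (w x)^2)"
      by (rule sum_mono)
    also have "\<dots> = 2 * (\<Sum>x\<in>X. norm (v x)^2) + 2 * l^2 * (\<Sum>x\<in>X. norm (w x)^2)"
      by (simp add: sum.distrib sum_distrib_left)
    finally have "(\<Sum>x\<in>X. norm (v1 x)^2)
        \<le> 2 * (\<Sum>x\<in>X. norm (v x)^2) + 2 * l^2 * (\<Sum>x\<in>X. norm (w x)^2)" .
    then have N_v1': "N v1 \<le> M * (2 * (\<Sum>x\<in>X. norm (v x)^2) + 2 * l^2 * (\<Sum>x\<in>X. norm (w x)^2))"
      using N_v1 X(2) by (meson mult_left_mono order_trans)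
    have "v = v1 + fscale l w" by (simp add: v1_def fscale_def fun_eq_iff)
    then have "N v \<le> 2 * N v1 + 2 * (l^2 * N w)"
      using N_add[OF v1] N_scale[OF w(1)] by simp
    also have "\<dots> \<le> 4 * M * (\<Sum>x\<in>X. norm (v x)^2) + l^2 * A"
      using N_v1' by (simp add: A_def algebra_simps)
    also have "\<dots> \<le> 4 * M * S + S / c * A"
    proof (intro add_mono mult_left_mono mult_right_mono)
      show "(\<Sum>x\<in>X. norm (v x)^2) \<le> S"
        unfolding S_def by (rule sum_mono2) (use X in auto)
      have "l^2 = \<bar>v x\<^sub>0 \<bullet> w x\<^sub>0\<bar>^2 / c^2" by (simp add: l_def power_divide)
      also have "\<dots> \<le> (norm (v x\<^sub>0) * norm (w x\<^sub>0))^2 / c^2"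
        by (intro divide_right_mono power_mono Cauchy_Schwarz_ineq2) auto
      also have "\<dots> = norm (v x\<^sub>0)^2 / c"
        using w(2) by (simp add: c_def power_mult_distrib power2_eq_square)
      also have "norm (v x\<^sub>0)^2 \<le> S"
        unfolding S_def using X(1) by (intro member_le_sum) auto
      finally show "l^2 \<le> S / c" using c by (simp add: divide_right_mono)
    qed (use X(2) A in auto)
    finally show ?thesis by (simp add: S_def algebra_simps)
  qed
  moreover have "4 * M + A / c \<ge> 0" using X(2) A c by simp
  ultimately show ?thesis by blast
qed

lemma point_values_dominate:
  fixes N :: "('a \<Rightarrow> 'b::real_inner) \<Rightarrow> real"
  assumes V: "fun_vec.subspace V" "V \<subseteq> fun_vec.span B" "finite B"
    and N_add: "\<And>f g. f \<in> V \<Longrightarrow> g \<in> V \<Longrightarrow> N (f + g) \<le> 2 * N f + 2 * N g"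
    and N_scale: "\<And>c f. f \<in> V \<Longrightarrow> N (fscale c f) = c^2 * N f"
    and N_nonneg: "\<And>f. f \<in> V \<Longrightarrow> N f \<ge> 0"
    and N_zero: "\<And>f. f \<in> V \<Longrightarrow> \<forall>x\<in>\<Omega>. f x = 0 \<Longrightarrow> N f = 0"
  shows "\<exists>X M. finite X \<and> X \<subseteq> \<Omega> \<and> M \<ge> 0 \<and> (\<forall>v\<in>V. N v \<le> M * (\<Sum>x\<in>X. norm (v x)^2))"
proof -
  have "\<exists>X M. finite X \<and> X \<subseteq> \<Omega> \<and> M \<ge> 0 \<and> (\<forall>v\<in>W. N v \<le> M * (\<Sum>x\<in>X. norm (v x)^2))"
    if "fun_vec.subspace W" "W \<subseteq> V" for W
    using that
  proof (induction "fun_vec.dim W" arbitrary: W rule: less_induct)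
    case less
    show ?case
    proof (cases "\<forall>v\<in>W. \<forall>x\<in>\<Omega>. v x = 0")
      case True
      then show ?thesis using N_zero less.prems(2) by (intro exI[of _ "{}"] exI[of _ 0]) auto
    next
      case False
      then obtain w x\<^sub>0 where w: "w \<in> W" "x\<^sub>0 \<in> \<Omega>" "w x\<^sub>0 \<noteq> 0" by blast
      define W1 where "W1 = {v\<in>W. v x\<^sub>0 \<bullet> w x\<^sub>0 = 0}"
      have W1: "fun_vec.subspace W1"
        using less.prems(1) unfolding W1_def fun_vec.subspace_def
        by (simp add: fscale_def inner_add_left zero_fun_def)
      have "W1 \<subseteq> W" "w \<notin> W1" using w(3) by (auto simp: W1_def)
      then have "fun_vec.dim W1 < fun_vec.dim W"
        using fun_vec_dim_less[OF W1 _ w(1) _ _ V(3)] less.prems(2) V(2) by blast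
      moreover have "W1 \<subseteq> V" using \<open>W1 \<subseteq> W\<close> less.prems(2) by blast
      ultimately obtain X M where X: "finite X" "X \<subseteq> \<Omega>" "M \<ge> 0"
          "\<forall>v\<in>W1. N v \<le> M * (\<Sum>x\<in>X. norm (v x)^2)"
        using less.hyps[OF _ W1] by blast
      have "\<exists>M'\<ge>0. \<forall>v\<in>W. N v \<le> M' * (\<Sum>x\<in>insert x\<^sub>0 X. norm (v x)^2)"
      proof (rule point_values_dominate_step[OF less.prems(1) _ _ _ w(1,3) X(1,3)])
        show "\<And>f g. f \<in> W \<Longrightarrow> g \<in> W \<Longrightarrow> N (f + g) \<le> 2 * N f + 2 * N g"
          using N_add less.prems(2) by blast
        show "\<And>c f. f \<in> W \<Longrightarrow> N (fscale c f) = c^2 * N f" using N_scale less.prems(2) by blast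
        show "\<And>f. f \<in> W \<Longrightarrow> N f \<ge> 0" using N_nonneg less.prems(2) by blast
        show "\<And>v. v \<in> W \<Longrightarrow> v x\<^sub>0 \<bullet> w x\<^sub>0 = 0 \<Longrightarrow> N v \<le> M * (\<Sum>x\<in>X. norm (v x)^2)"
          using X(4) by (auto simp: W1_def)
      qed
      then obtain M' where "M' \<ge> 0" "\<forall>v\<in>W. N v \<le> M' * (\<Sum>x\<in>insert x\<^sub>0 X. norm (v x)^2)"
        by blast
      then show ?thesis
        using X(1,2) w(2) by (intro exI[of _ "insert x\<^sub>0 X"] exI[of _ M']) auto
    qed
  qed
  from this[OF V(1) order_refl] show ?thesis .
qed

definition finite_dim_L2 :: "(real^'n) set \<Rightarrow> (real^'n \<Rightarrow> 'b::euclidean_space) set \<Rightarrow> bool" where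
  "finite_dim_L2 \<Omega> V \<longleftrightarrow>
     fun_vec.subspace V \<and> (\<exists>B. finite B \<and> V \<subseteq> fun_vec.span B) \<and> (\<forall>v\<in>V. L2 \<Omega> v)"


section \<open>Calculus in \<open>L\<^sup>2\<close>\<close>

lemma set_borel_measurable_continuous_Pair:
  fixes f :: "'a \<Rightarrow> 'b::euclidean_space" and g :: "'a \<Rightarrow> 'c::euclidean_space"
    and H :: "'b \<Rightarrow> 'c \<Rightarrow> 'd::euclidean_space"
  assumes "set_borel_measurable M A f" "set_borel_measurable M A g"
    and "continuous_on UNIV (\<lambda>x. H (fst x) (snd x))" "H 0 0 = 0"
  shows "set_borel_measurable M A (\<lambda>x. H (f x) (g x))"
proof -
  have "(\<lambda>x. indicator A x *\<^sub>R H (f x) (g x))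
      = (\<lambda>x. H (indicator A x *\<^sub>R f x) (indicator A x *\<^sub>R g x))"
    using assms(4) by (auto simp: indicator_def fun_eq_iff)
  then show ?thesis
    using borel_measurable_continuous_Pair[OF assms(1,2)[unfolded set_borel_measurable_def] assms(3)]
    by (simp add: set_borel_measurable_def)
qed

lemma L2_measurable_inner:
  fixes f g :: "real^'n \<Rightarrow> 'b::euclidean_space"
  assumes "L2 \<Omega> f" "L2 \<Omega> g"
  shows "set_borel_measurable lebesgue \<Omega> (\<lambda>x. f x \<bullet> g x)"
  using assms by (intro set_borel_measurable_continuous_Pair[where H=inner])
    (auto simp: L2_def intro!: continuous_intros)

lemma L2_add:
  fixes f g :: "real^'n \<Rightarrow> 'b::euclidean_space"
  assumes "L2 \<Omega> f" "L2 \<Omega> g"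
  shows "L2 \<Omega> (\<lambda>x. f x + g x)"
proof -
  have m: "set_borel_measurable lebesgue \<Omega> (\<lambda>x. f x + g x)"
    using assms by (intro set_borel_measurable_continuous_Pair[where H=plus])
      (auto simp: L2_def intro!: continuous_intros)
  have bound: "norm (f x + g x)^2 \<le> 2 * norm (f x)^2 + 2 * norm (g x)^2" for x
  proof -
    have "norm (f x + g x)^2 \<le> (norm (f x) + norm (g x))^2"
      by (simp add: norm_triangle_ineq power_mono)
    also have "\<dots> \<le> 2 * norm (f x)^2 + 2 * norm (g x)^2" by (rule square_add_le)
    finally show ?thesis .
  qed
  have "set_integrable lebesgue \<Omega> (\<lambda>x. 2 * norm (f x)^2 + 2 * norm (g x)^2)"
    using assms by (auto simp: L2_def)
  moreover have "set_borel_measurable lebesgue \<Omega> (\<lambda>x. norm (f x + g x)^2)"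
    by (rule set_borel_measurable_continuous_Pair[OF m m, where H="\<lambda>a b. norm a ^ 2"])
      (auto intro!: continuous_intros)
  ultimately have "set_integrable lebesgue \<Omega> (\<lambda>x. norm (f x + g x)^2)"
    by (rule set_integrable_bound, intro AE_I2) (use bound in auto)
  then show ?thesis using m by (simp add: L2_def)
qed

lemma L2_zero: "L2 \<Omega> (\<lambda>x. 0 :: 'b::euclidean_space)"
  by (simp add: L2_def set_borel_measurable_def set_integrable_def)

lemma L2_sum:
  fixes f :: "'i \<Rightarrow> real^'n \<Rightarrow> 'b::euclidean_space"
  shows "finite I \<Longrightarrow> (\<And>i. i \<in> I \<Longrightarrow> L2 \<Omega> (f i)) \<Longrightarrow> L2 \<Omega> (\<lambda>x. \<Sum>i\<in>I. f i x)"
  by (induction I rule: finite_induct) (simp_all add: L2_zero L2_add)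

lemma L2_integrable_inner:
  fixes f g :: "real^'n \<Rightarrow> 'b::euclidean_space"
  assumes "L2 \<Omega> f" "L2 \<Omega> g"
  shows "set_integrable lebesgue \<Omega> (\<lambda>x. f x \<bullet> g x)"
proof (rule set_integrable_bound[OF _ L2_measurable_inner[OF assms]])
  show "set_integrable lebesgue \<Omega> (\<lambda>x. norm (f x)^2 + norm (g x)^2)"
    using assms by (auto simp: L2_def)
  have "norm (f x \<bullet> g x) \<le> norm (norm (f x)^2 + norm (g x)^2)" for x
  proof -
    have "norm (f x \<bullet> g x) \<le> norm (f x) * norm (g x)" using Cauchy_Schwarz_ineq2 by simp
    also have "\<dots> \<le> norm (f x)^2 + norm (g x)^2"
    proof -
      have "2 * (norm (f x) * norm (g x)) \<le> norm (f x)^2 + norm (g x)^2"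
        using zero_le_power2[of "norm (f x) - norm (g x)"] by (simp add: power2_diff algebra_simps)
      moreover have "0 \<le> norm (f x) * norm (g x)" by simp
      ultimately show ?thesis by linarith
    qed
    finally show ?thesis by simp
  qed
  then show "AE x in lebesgue. x \<in> \<Omega> \<longrightarrow> norm (f x \<bullet> g x) \<le> norm (norm (f x)^2 + norm (g x)^2)"
    by simp
qed

lemma l2ip_self: "l2ip \<Omega> f f = l2norm_sq \<Omega> f"
  by (simp add: l2ip_def l2norm_sq_def power2_norm_eq_inner)

lemma l2ip_commute: "l2ip \<Omega> f g = l2ip \<Omega> g f"
  by (simp add: l2ip_def inner_commute)

lemma l2ip_scaleR_right: "l2ip \<Omega> f (\<lambda>x. c *\<^sub>R g x) = c * l2ip \<Omega> f g"
  by (simp add: l2ip_def)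

lemma l2ip_add_right:
  fixes f g h :: "real^'n \<Rightarrow> 'b::euclidean_space"
  assumes "L2 \<Omega> f" "L2 \<Omega> g" "L2 \<Omega> h"
  shows "l2ip \<Omega> f (\<lambda>x. g x + h x) = l2ip \<Omega> f g + l2ip \<Omega> f h"
  unfolding l2ip_def inner_add_right
  using L2_integrable_inner[OF assms(1,2)] L2_integrable_inner[OF assms(1,3)]
  by (simp add: set_integral_add)

lemma set_integral_nonneg_real: "(\<And>x. x \<in> A \<Longrightarrow> 0 \<le> f x) \<Longrightarrow> 0 \<le> (LINT x:A|M. (f x :: real))"
  unfolding set_lebesgue_integral_def
  by (rule integral_nonneg_AE) (auto simp: indicator_def)

lemma set_integral_abs_le:
  fixes f g :: "_ \<Rightarrow> real"
  assumes "set_integrable M A f" "set_integrable M A g" "\<And>x. x \<in> A \<Longrightarrow> \<bar>f x\<bar> \<le> g x"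
  shows "\<bar>LINT x:A|M. f x\<bar> \<le> (LINT x:A|M. g x)"
proof -
  have "(LINT x:A|M. f x) \<le> (LINT x:A|M. g x)"
    using assms by (intro set_integral_mono) (auto dest: abs_le_D1)
  moreover have "(LINT x:A|M. - f x) \<le> (LINT x:A|M. g x)"
    using assms set_integrable_mult_right[of "-1" M A f] by (intro set_integral_mono) (auto dest: abs_le_D2)
  ultimately show ?thesis by (simp add: set_integral_uminus[OF assms(1)])
qed

lemma set_integral_sum:
  fixes f :: "'i \<Rightarrow> 'a \<Rightarrow> real"
  assumes "\<And>i. i \<in> I \<Longrightarrow> set_integrable M A (f i)"
  shows "set_integrable M A (\<lambda>x. \<Sum>i\<in>I. f i x)"
    and "(LINT x:A|M. (\<Sum>i\<in>I. f i x)) = (\<Sum>i\<in>I. LINT x:A|M. f i x)"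
  using assms unfolding set_integrable_def set_lebesgue_integral_def scaleR_sum_right
  by (auto intro!: Bochner_Integration.integral_sum)

lemma l2norm_sq_nonneg: "l2norm_sq \<Omega> f \<ge> 0"
  unfolding l2norm_sq_def by (rule set_integral_nonneg_real) simp

lemma l4norm_pow4_nonneg: "l4norm_pow4 \<Omega> f \<ge> 0"
  unfolding l4norm_pow4_def by (rule set_integral_nonneg_real) simp

lemma l2norm_sq_scaleR: "l2norm_sq \<Omega> (\<lambda>x. c *\<^sub>R f x) = c^2 * l2norm_sq \<Omega> f"
  by (simp add: l2norm_sq_def power_mult_distrib)

lemma l2norm_sq_eq_0_if_vanishing: "\<forall>x\<in>\<Omega>. f x = 0 \<Longrightarrow> l2norm_sq \<Omega> f = 0"
proof -
  assume "\<forall>x\<in>\<Omega>. f x = 0"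
  then have "(\<lambda>x. indicator \<Omega> x *\<^sub>R norm (f x)^2) = (\<lambda>x. 0::real)"
    by (auto simp: indicator_def fun_eq_iff)
  then show ?thesis unfolding l2norm_sq_def set_lebesgue_integral_def by simp
qed

lemma l2norm_sq_add:
  fixes f g :: "real^'n \<Rightarrow> 'b::euclidean_space"
  assumes "L2 \<Omega> f" "L2 \<Omega> g"
  shows "l2norm_sq \<Omega> (\<lambda>x. f x + g x) = l2norm_sq \<Omega> f + 2 * l2ip \<Omega> f g + l2norm_sq \<Omega> g"
proof -
  have "norm (f x + g x)^2 = norm (f x)^2 + 2 * (f x \<bullet> g x) + norm (g x)^2" for x
    by (simp add: power2_norm_eq_inner inner_add_left inner_add_right inner_commute)
  then show ?thesis
    using assms L2_integrable_inner[OF assms] unfolding l2norm_sq_def l2ip_def L2_def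
    by (simp add: set_integral_add)
qed

lemma l2ip_Young:
  fixes f g :: "real^'n \<Rightarrow> 'b::euclidean_space"
  assumes "L2 \<Omega> f" "L2 \<Omega> g" "e > 0"
  shows "\<bar>l2ip \<Omega> f g\<bar> \<le> (e * l2norm_sq \<Omega> f + l2norm_sq \<Omega> g / e) / 2"
proof -
  define Y where "Y x = (e * norm (f x)^2 + norm (g x)^2 / e) / 2" for x
  have pointwise: "\<bar>f x \<bullet> g x\<bar> \<le> Y x" for x
  proof -
    have "\<bar>f x \<bullet> g x\<bar> \<le> norm (f x) * norm (g x)" by (rule Cauchy_Schwarz_ineq2)
    also have "\<dots> \<le> Y x"
      using divide_nonneg_pos[OF zero_le_power2[of "e * norm (f x) - norm (g x)"] assms(3)] assms(3)
      by (simp add: Y_def power2_eq_square field_simps)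
    finally show ?thesis .
  qed
  have Y: "set_integrable lebesgue \<Omega> Y" and "(LINT x:\<Omega>|lebesgue. Y x) = (e * l2norm_sq \<Omega> f + l2norm_sq \<Omega> g / e) / 2"
    using assms unfolding Y_def l2norm_sq_def L2_def by (simp_all add: set_integral_add)
  moreover have "\<bar>l2ip \<Omega> f g\<bar> \<le> (LINT x:\<Omega>|lebesgue. Y x)"
    unfolding l2ip_def by (rule set_integral_abs_le[OF L2_integrable_inner[OF assms(1,2)] Y pointwise])
  ultimately show ?thesis by simp
qed

lemma l2norm_sq_add_le:
  fixes f g :: "real^'n \<Rightarrow> 'b::euclidean_space"
  assumes "L2 \<Omega> f" "L2 \<Omega> g"
  shows "l2norm_sq \<Omega> (\<lambda>x. f x + g x) \<le> 2 * l2norm_sq \<Omega> f + 2 * l2norm_sq \<Omega> g"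
  using l2norm_sq_add[OF assms] l2ip_Young[OF assms, of 1] by (simp add: abs_le_iff)

lemma le_sqrt_mult_if_Young_bound:
  fixes p a b :: real
  assumes "a \<ge> 0" "b \<ge> 0" and Young: "\<And>e. e > 0 \<Longrightarrow> p \<le> (e * a + b / e) / 2"
  shows "p \<le> sqrt a * sqrt b"
proof (cases "p \<le> 0")
  case True
  moreover have "0 \<le> sqrt a * sqrt b" using assms by simp
  ultimately show ?thesis by linarith
next
  case False
  then have p: "p > 0" by simp
  have "a > 0"
  proof (rule ccontr)
    assume "\<not> a > 0"
    then have "p \<le> b / ((b + 1) / p) / 2" using Young[of "(b + 1) / p"] p assms by simp
    also have "\<dots> < p"
      using p assms by (simp add: field_simps add_nonneg_pos)
    finally show False by simp
  qed
  then have "p \<le> (p + a * b / p) / 2" using Young[of "p / a"] p by (simp add: field_simps)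
  then have "p^2 \<le> a * b" using p by (simp add: field_simps power2_eq_square)
  then show ?thesis by (metis real_le_rsqrt real_sqrt_mult)
qed

lemma l2ip_Cauchy_Schwarz:
  fixes f g :: "real^'n \<Rightarrow> 'b::euclidean_space"
  assumes "L2 \<Omega> f" "L2 \<Omega> g"
  shows "\<bar>l2ip \<Omega> f g\<bar> \<le> sqrt (l2norm_sq \<Omega> f) * sqrt (l2norm_sq \<Omega> g)"
  using l2ip_Young[OF assms]
  by (intro le_sqrt_mult_if_Young_bound l2norm_sq_nonneg)

lemma finite_dim_L2_tendsto_0:
  fixes g :: "'c \<Rightarrow> real^'n \<Rightarrow> 'b::euclidean_space"
  assumes V: "finite_dim_L2 \<Omega> V" and ev: "\<forall>\<^sub>F s in F. g s \<in> V"
    and pointwise: "\<And>x. x \<in> \<Omega> \<Longrightarrow> ((\<lambda>s. g s x) \<longlongrightarrow> 0) F"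
  shows "((\<lambda>s. l2norm_sq \<Omega> (g s)) \<longlongrightarrow> 0) F"
proof -
  obtain B where B: "fun_vec.subspace V" "finite B" "V \<subseteq> fun_vec.span B" "\<forall>v\<in>V. L2 \<Omega> v"
    using V by (auto simp: finite_dim_L2_def)
  obtain X M where XM: "finite X" "X \<subseteq> \<Omega>" "M \<ge> 0"
      "\<forall>v\<in>V. l2norm_sq \<Omega> v \<le> M * (\<Sum>x\<in>X. norm (v x)^2)"
    using point_values_dominate[OF B(1,3,2), of "l2norm_sq \<Omega>" \<Omega>] B(4)
    by (auto simp: plus_fun_def fscale_def l2norm_sq_add_le l2norm_sq_scaleR l2norm_sq_nonneg
        l2norm_sq_eq_0_if_vanishing)
  have "((\<lambda>s. M * (\<Sum>x\<in>X. norm (g s x)^2)) \<longlongrightarrow> M * (\<Sum>x\<in>X. norm (0::'b)^2)) F"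
    using XM(2) pointwise by (intro tendsto_intros) auto
  then have "((\<lambda>s. M * (\<Sum>x\<in>X. norm (g s x)^2)) \<longlongrightarrow> 0) F" by simp
  moreover have "\<forall>\<^sub>F s in F. norm (l2norm_sq \<Omega> (g s)) \<le> M * (\<Sum>x\<in>X. norm (g s x)^2)"
    using ev by eventually_elim (use XM(4) in \<open>auto simp: abs_of_nonneg l2norm_sq_nonneg\<close>)
  ultimately show ?thesis by (rule Lim_null_comparison[rotated])
qed

lemma vector_derivative_quotient_tendsto:
  fixes f :: "real \<Rightarrow> 'b::real_normed_vector"
  assumes "(f has_vector_derivative f') (at t within S)"
  shows "((\<lambda>y. (1 / (y - t)) *\<^sub>R (f y - f t) - f') \<longlongrightarrow> 0) (at t within S)"
proof (rule Lim_null_comparison)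
  have "((\<lambda>y. (1 / norm (y - t)) *\<^sub>R (f y - (f t + (y - t) *\<^sub>R f'))) \<longlongrightarrow> 0) (at t within S)"
    using assms unfolding has_vector_derivative_def has_derivative_within by blast
  then show "((\<lambda>y. norm ((1 / norm (y - t)) *\<^sub>R (f y - (f t + (y - t) *\<^sub>R f')))) \<longlongrightarrow> 0)
      (at t within S)"
    by (rule tendsto_norm_zero)
  have "(1 / (y - t)) *\<^sub>R (f y - f t) - f' = (1 / (y - t)) *\<^sub>R (f y - (f t + (y - t) *\<^sub>R f'))"
    if "y \<noteq> t" for y
    using that by (simp add: scaleR_diff_right scaleR_add_right)
  then show "\<forall>\<^sub>F y in at t within S. norm ((1 / (y - t)) *\<^sub>R (f y - f t) - f')
      \<le> norm ((1 / norm (y - t)) *\<^sub>R (f y - (f t + (y - t) *\<^sub>R f')))"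
    by (auto simp: eventually_at_filter)
qed

lemma l2norm_sq_has_real_derivative:
  fixes u :: "real \<Rightarrow> real^'n \<Rightarrow> 'b::euclidean_space"
  assumes V: "finite_dim_L2 \<Omega> V" and u: "\<And>s. s \<in> S \<Longrightarrow> u s \<in> V" and u': "u' \<in> V"
    and t: "t \<in> S"
    and deriv: "\<And>x. x \<in> \<Omega> \<Longrightarrow> ((\<lambda>s. u s x) has_vector_derivative u' x) (at t within S)"
  shows "((\<lambda>s. l2norm_sq \<Omega> (u s)) has_real_derivative 2 * l2ip \<Omega> u' (u t)) (at t within S)"
proof -
  let ?F = "at t within S" and ?N = "l2norm_sq \<Omega>"
  define q where "q s = fscale (1 / (s - t)) (u s - u t)" for s
  define r where "r s = q s - u'" for s
  have V_sub: "fun_vec.subspace V" and V_L2: "\<And>v. v \<in> V \<Longrightarrow> L2 \<Omega> v"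
    using V by (auto simp: finite_dim_L2_def)
  have qV: "q s \<in> V" and rV: "r s \<in> V" if "s \<in> S" for s
    using u[OF that] u[OF t] u' V_sub unfolding q_def r_def
    by (meson fun_vec.subspace_diff fun_vec.subspace_scale)+
  have q_eq: "q s = (\<lambda>x. u' x + r s x)" for s by (simp add: r_def)
  have ev: "\<forall>\<^sub>F s in ?F. s \<in> S \<and> s \<noteq> t" by (auto simp: eventually_at_filter)
  have N_r: "((\<lambda>s. ?N (r s)) \<longlongrightarrow> 0) ?F"
  proof (rule finite_dim_L2_tendsto_0[OF V])
    show "\<forall>\<^sub>F s in ?F. r s \<in> V" using ev by eventually_elim (use rV in auto)
    show "((\<lambda>s. r s x) \<longlongrightarrow> 0) ?F" if "x \<in> \<Omega>" for x
      using vector_derivative_quotient_tendsto[OF deriv[OF that]] by (simp add: r_def q_def fscale_def)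
  qed
  have quotient: "(?N (u s) - ?N (u t)) / (s - t)
      = 2 * l2ip \<Omega> u' (u t) + 2 * l2ip \<Omega> (u t) (r s) + (s - t) * ?N (q s)"
    if s: "s \<in> S" "s \<noteq> t" for s
  proof -
    have "u s = (\<lambda>x. u t x + (s - t) *\<^sub>R q s x)"
      using s(2) by (simp add: q_def fscale_def fun_eq_iff)
    then have expand: "?N (u s) = ?N (u t) + 2 * ((s - t) * l2ip \<Omega> (u t) (q s)) + (s - t)^2 * ?N (q s)"
      using l2norm_sq_add[OF V_L2[OF u[OF t]], of "\<lambda>x. (s - t) *\<^sub>R q s x"]
        V_L2[OF fun_vec.subspace_scale[OF V_sub qV[OF s(1)]]]
      by (simp add: fscale_def l2ip_scaleR_right l2norm_sq_scaleR)
    have "l2ip \<Omega> (u t) (q s) = l2ip \<Omega> (u t) u' + l2ip \<Omega> (u t) (r s)"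
      using l2ip_add_right[OF V_L2[OF u[OF t]] V_L2[OF u'] V_L2[OF rV[OF s(1)]]] by (simp add: q_eq)
    with expand have "?N (u s) - ?N (u t)
        = (s - t) * (2 * l2ip \<Omega> u' (u t) + 2 * l2ip \<Omega> (u t) (r s) + (s - t) * ?N (q s))"
      by (simp only: l2ip_commute[of \<Omega> u']) (simp add: algebra_simps power2_eq_square)
    then show ?thesis using s(2) by (simp add: nonzero_mult_div_cancel_left)
  qed
  have "((\<lambda>s. 2 * l2ip \<Omega> (u t) (r s)) \<longlongrightarrow> 0) ?F"
  proof (rule Lim_null_comparison)
    show "\<forall>\<^sub>F s in ?F. norm (2 * l2ip \<Omega> (u t) (r s)) \<le> 2 * (sqrt (?N (u t)) * sqrt (?N (r s)))"
    proof (rule eventually_mono[OF ev])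
      fix s assume "s \<in> S \<and> s \<noteq> t"
      then have "\<bar>l2ip \<Omega> (u t) (r s)\<bar> \<le> sqrt (?N (u t)) * sqrt (?N (r s))"
        using l2ip_Cauchy_Schwarz[OF V_L2[OF u[OF t]] V_L2[OF rV]] by blast
      then show "norm (2 * l2ip \<Omega> (u t) (r s)) \<le> 2 * (sqrt (?N (u t)) * sqrt (?N (r s)))"
        by (simp add: abs_mult)
    qed
    have "((\<lambda>s. 2 * (sqrt (?N (u t)) * sqrt (?N (r s)))) \<longlongrightarrow> 2 * (sqrt (?N (u t)) * sqrt 0)) ?F"
      by (intro tendsto_intros N_r)
    then show "((\<lambda>s. 2 * (sqrt (?N (u t)) * sqrt (?N (r s)))) \<longlongrightarrow> 0) ?F" by simp
  qed
  moreover have "((\<lambda>s. (s - t) * ?N (q s)) \<longlongrightarrow> 0) ?F"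
  proof (rule Lim_null_comparison)
    show "\<forall>\<^sub>F s in ?F. norm ((s - t) * ?N (q s)) \<le> \<bar>s - t\<bar> * (2 * ?N u' + 2 * ?N (r s))"
    proof (rule eventually_mono[OF ev])
      fix s assume "s \<in> S \<and> s \<noteq> t"
      then have "?N (q s) \<le> 2 * ?N u' + 2 * ?N (r s)"
        using l2norm_sq_add_le[OF V_L2[OF u'] V_L2[OF rV]] by (simp add: q_eq)
      then have "\<bar>s - t\<bar> * ?N (q s) \<le> \<bar>s - t\<bar> * (2 * ?N u' + 2 * ?N (r s))"
        by (rule mult_left_mono) simp
      then show "norm ((s - t) * ?N (q s)) \<le> \<bar>s - t\<bar> * (2 * ?N u' + 2 * ?N (r s))"
        by (simp add: abs_mult abs_of_nonneg l2norm_sq_nonneg)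
    qed
    have "((\<lambda>s. \<bar>s - t\<bar> * (2 * ?N u' + 2 * ?N (r s))) \<longlongrightarrow> \<bar>t - t\<bar> * (2 * ?N u' + 2 * 0)) ?F"
      by (intro tendsto_intros N_r)
    then show "((\<lambda>s. \<bar>s - t\<bar> * (2 * ?N u' + 2 * ?N (r s))) \<longlongrightarrow> 0) ?F" by simp
  qed
  ultimately have "((\<lambda>s. 2 * l2ip \<Omega> u' (u t) + 2 * l2ip \<Omega> (u t) (r s) + (s - t) * ?N (q s))
      \<longlongrightarrow> 2 * l2ip \<Omega> u' (u t) + 0 + 0) ?F"
    by (intro tendsto_add tendsto_const)
  moreover have "\<forall>\<^sub>F s in ?F. 2 * l2ip \<Omega> u' (u t) + 2 * l2ip \<Omega> (u t) (r s) + (s - t) * ?N (q s)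
      = (?N (u s) - ?N (u t)) / (s - t)"
    using ev by (rule eventually_mono) (simp add: quotient)
  ultimately have "((\<lambda>s. (?N (u s) - ?N (u t)) / (s - t)) \<longlongrightarrow> 2 * l2ip \<Omega> u' (u t) + 0 + 0) ?F"
    by (rule Lim_transform_eventually)
  then show ?thesis by (simp add: has_field_derivative_iff)
qed

section \<open>The energy identity of the scheme\<close>

lemma fe_space_finite_dim_L2:
  assumes "fe_space \<Omega> Th V"
  shows "finite_dim_L2 \<Omega> V"
proof -
  obtain B where B: "finite B" "B \<subseteq> V" "\<forall>v\<in>V. \<exists>c. v = (\<lambda>x. \<Sum>b\<in>B. c b *\<^sub>R b x)"
    using assms unfolding fe_space_def by blast
  have "V \<subseteq> fun_vec.span B"
  proof
    fix v assume "v \<in> V"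
    then obtain c where "v = (\<lambda>x. \<Sum>b\<in>B. c b *\<^sub>R b x)" using B(3) by blast
    then have "v = (\<Sum>b\<in>B. fscale (c b) b)"
      by (simp add: fun_eq_iff sum_fun_apply[OF B(1)] fscale_def)
    also have "\<dots> \<in> fun_vec.span B" by (intro fun_vec.span_sum fun_vec.span_scale fun_vec.span_base)
    finally show "v \<in> fun_vec.span B" .
  qed
  moreover have "fun_vec.subspace V"
    using assms unfolding fun_vec.subspace_def fe_space_def fscale_def plus_fun_def zero_fun_def
    by blast
  ultimately show ?thesis
    using assms B(1) by (auto simp: finite_dim_L2_def fe_space_def H2n_def H2_def H1_def)
qed

lemma lap_L2: "H2 \<Omega> v \<Longrightarrow> L2 \<Omega> (lap \<Omega> v)"
  unfolding lap_def H2_def H1_def by (intro L2_sum) auto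

lemma gradip_self: "gradip \<Omega> v v = (\<Sum>i\<in>UNIV. l2norm_sq \<Omega> (wd \<Omega> i v))"
  by (simp add: gradip_def l2ip_self)

lemma gradip_self_nonneg: "gradip \<Omega> v v \<ge> 0"
  unfolding gradip_self by (intro sum_nonneg l2norm_sq_nonneg)

text \<open>Green's formula turns \<open>\<parallel>\<nabla>v\<parallel>\<^sup>2\<close> into \<open>-\<langle>\<Delta>v, v\<rangle>\<close>.\<close>

lemma H2n_gradip_self_le:
  assumes "H2n \<Omega> v" "e > 0"
  shows "gradip \<Omega> v v \<le> (e * l2norm_sq \<Omega> (lap \<Omega> v) + l2norm_sq \<Omega> v / e) / 2"
proof -
  have "H2 \<Omega> v" "H1 \<Omega> v" using assms(1) by (auto simp: H2n_def H2_def)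
  then have "gradip \<Omega> v v = - l2ip \<Omega> (lap \<Omega> v) v"
    using assms(1) by (auto simp: H2n_def)
  with l2ip_Young[OF lap_L2[OF \<open>H2 \<Omega> v\<close>] _ assms(2), of v] \<open>H1 \<Omega> v\<close> show ?thesis
    by (simp add: H1_def abs_le_iff)
qed

lemma Cform_self_eq_0: "Cform \<Omega> \<beta> \<eta> v v = 0"
  by (simp add: Cform_def dot_cross_self)

lemma Bform_self_ge:
  assumes "\<beta>5 \<ge> 0"
  shows "Bform \<Omega> \<beta>3 \<beta>5 v v v v \<ge> \<beta>3 * l4norm_pow4 \<Omega> v"
proof -
  have "(\<lambda>x. (v x \<bullet> v x) * (v x \<bullet> v x)) = (\<lambda>x. norm (v x)^4)"
    by (simp add: fun_eq_iff power2_norm_eq_inner[symmetric] power_mult[symmetric])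
  moreover have "0 \<le> (LINT x:\<Omega>|lebesgue. (v x \<bullet> v x) * (\<Sum>i\<in>UNIV. wd \<Omega> i v x \<bullet> wd \<Omega> i v x))"
    by (rule set_integral_nonneg_real) (auto intro!: sum_nonneg mult_nonneg_nonneg)
  moreover have "0 \<le> (LINT x:\<Omega>|lebesgue. \<Sum>i\<in>UNIV. (v x \<bullet> wd \<Omega> i v x) * (v x \<bullet> wd \<Omega> i v x))"
    by (rule set_integral_nonneg_real) (auto intro!: sum_nonneg)
  ultimately show ?thesis
    using assms unfolding Bform_def l4norm_pow4_def by simp
qed

lemma admissible_field_AE_norm_le_1:
  assumes "open \<Omega>" "admissible_field \<Omega> j"
  shows "AE x in lebesgue. x \<in> \<Omega> \<longrightarrow> norm (j x) \<le> 1"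
proof -
  have "AE x in lebesgue_on \<Omega>. ereal (norm (j x)) \<le> 1"
    using esssup_AE[of "\<lambda>x. ereal (norm (j x))" "lebesgue_on \<Omega>"] assms(2)
    by (simp add: admissible_field_def)
  then show ?thesis using assms(1) by (subst (asm) AE_restrict_space_iff) auto
qed

lemma transport_self_le:
  fixes v :: "real^'n \<Rightarrow> real^3"
  assumes "open \<Omega>" "admissible_field \<Omega> j" "H1 \<Omega> v"
  shows "transport \<Omega> j v v \<le> (gradip \<Omega> v v + real CARD('n) * l2norm_sq \<Omega> v) / 2"
proof -
  define h where "h i x = (norm (wd \<Omega> i v x)^2 + norm (v x)^2) / 2" for i x
  have h: "set_integrable lebesgue \<Omega> (h i)"
    and h_int: "(LINT x:\<Omega>|lebesgue. h i x) = (l2norm_sq \<Omega> (wd \<Omega> i v) + l2norm_sq \<Omega> v) / 2" for i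
    using assms(3) unfolding h_def H1_def L2_def l2norm_sq_def by (simp_all add: set_integral_add)
  note sum_h = set_integral_sum[of UNIV, OF h]
  have pointwise: "(\<Sum>i\<in>UNIV. j x $ i * (wd \<Omega> i v x \<bullet> v x)) \<le> (\<Sum>i\<in>UNIV. h i x)"
    if "norm (j x) \<le> 1" for x
  proof (rule sum_mono)
    fix i
    have "j x $ i * (wd \<Omega> i v x \<bullet> v x) \<le> \<bar>j x $ i\<bar> * \<bar>wd \<Omega> i v x \<bullet> v x\<bar>"
      by (simp add: abs_mult[symmetric])
    also have "\<dots> \<le> 1 * (norm (wd \<Omega> i v x) * norm (v x))"
      using that component_le_norm_cart[of "j x" i] Cauchy_Schwarz_ineq2[of "wd \<Omega> i v x" "v x"]
      by (intro mult_mono) auto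
    also have "\<dots> \<le> h i x"
      using zero_le_power2[of "norm (wd \<Omega> i v x) - norm (v x)"] by (simp add: h_def power2_diff)
    finally show "j x $ i * (wd \<Omega> i v x \<bullet> v x) \<le> h i x" .
  qed
  have "transport \<Omega> j v v \<le> (LINT x:\<Omega>|lebesgue. \<Sum>i\<in>UNIV. h i x)"
    unfolding transport_def set_lebesgue_integral_def
  proof (rule integral_mono_AE')
    show "integrable lebesgue (\<lambda>x. indicat_real \<Omega> x *\<^sub>R (\<Sum>i\<in>UNIV. h i x))"
      using sum_h(1) by (simp add: set_integrable_def)
    show "AE x in lebesgue. indicat_real \<Omega> x *\<^sub>R (\<Sum>i\<in>UNIV. j x $ i * (wd \<Omega> i v x \<bullet> v x))
        \<le> indicat_real \<Omega> x *\<^sub>R (\<Sum>i\<in>UNIV. h i x)"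
      using admissible_field_AE_norm_le_1[OF assms(1,2)]
      by eventually_elim (use pointwise in \<open>auto simp: indicator_def\<close>)
    show "AE x in lebesgue. 0 \<le> indicat_real \<Omega> x *\<^sub>R (\<Sum>i\<in>UNIV. h i x)"
      by (rule AE_I2) (auto simp: indicator_def h_def intro!: sum_nonneg)
  qed
  also have "\<dots> = (gradip \<Omega> v v + real CARD('n) * l2norm_sq \<Omega> v) / 2"
    unfolding sum_h(2) h_int gradip_self
    by (simp add: sum_divide_distrib[symmetric] sum.distrib)
  finally show ?thesis .
qed

definition energy_rate :: "real \<Rightarrow> real \<Rightarrow> real \<Rightarrow> real \<Rightarrow> real \<Rightarrow> real" where
  "energy_rate \<beta>1 \<beta>2 \<beta>3 \<beta>6 n =
     2 * \<beta>3 + \<beta>6 * n + (2 * \<bar>\<beta>1\<bar> + \<beta>6) * (2 * \<bar>\<beta>1\<bar> + \<beta>6 + 1) / (2 * \<beta>2)"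

lemma energy_rate_nonneg:
  "\<beta>2 > 0 \<Longrightarrow> \<beta>3 \<ge> 0 \<Longrightarrow> \<beta>6 \<ge> 0 \<Longrightarrow> n \<ge> 0 \<Longrightarrow> energy_rate \<beta>1 \<beta>2 \<beta>3 \<beta>6 n \<ge> 0"
  by (simp add: energy_rate_def)

text \<open>Young's inequality with weight \<open>e = \<beta>\<^sub>2 / (a + 1)\<close> absorbs the gradient into the
  biharmonic term.\<close>

lemma absorb_gradient_term:
  fixes a \<beta>2 G L E :: real
  assumes "a \<ge> 0" "\<beta>2 > 0" "L \<ge> 0"
    and G: "G \<le> (\<beta>2 / (a + 1) * L + E / (\<beta>2 / (a + 1))) / 2"
  shows "a * G \<le> \<beta>2 * L + a * (a + 1) / (2 * \<beta>2) * E"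
proof -
  define e where "e = \<beta>2 / (a + 1)"
  have e: "a / e = a * (a + 1) / \<beta>2" "a * e \<le> \<beta>2"
    using assms by (simp_all add: e_def field_simps)
  have "a * G \<le> a * ((e * L + E / e) / 2)"
    using mult_left_mono[OF G assms(1)] by (simp add: e_def)
  also have "\<dots> = a * e / 2 * L + a / e / 2 * E"
    by (simp add: algebra_simps add_divide_distrib)
  also have "a / e / 2 * E = a * (a + 1) / (2 * \<beta>2) * E" using e(1) by simp
  also have "a * e / 2 * L \<le> \<beta>2 * L"
  proof -
    have "a * e / 2 * L \<le> \<beta>2 / 2 * L" using mult_right_mono[OF e(2) assms(3)] by simp
    also have "\<dots> \<le> \<beta>2 * L" using assms by (intro mult_right_mono) simp_all
    finally show ?thesis .
  qed
  finally show ?thesis by simp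
qed

lemma semidiscrete_energy_inequality:
  fixes u u' :: "real \<Rightarrow> real^'n \<Rightarrow> real^3"
  assumes "open \<Omega>" "admissible_field \<Omega> j" "fe_space \<Omega> Th V"
    and sol: "semidiscrete_solution \<Omega> j \<alpha> \<beta>1 \<beta>2 \<beta>3 \<beta>4 \<beta>5 \<beta>6 T V u u'" and s: "s \<in> {0..T}"
    and \<beta>: "\<beta>2 > 0" "\<beta>5 \<ge> 0" "\<beta>6 \<ge> 0"
  shows "2 * l2ip \<Omega> (u' s) (u s) + \<beta>2 * l2norm_sq \<Omega> (lap \<Omega> (u s)) + 2 * \<beta>3 * l4norm_pow4 \<Omega> (u s)
    \<le> energy_rate \<beta>1 \<beta>2 \<beta>3 \<beta>6 (real CARD('n)) * l2norm_sq \<Omega> (u s)"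
proof -
  define v where "v = u s"
  define E L Q G where "E = l2norm_sq \<Omega> v" and "L = l2norm_sq \<Omega> (lap \<Omega> v)"
    and "Q = l4norm_pow4 \<Omega> v" and "G = gradip \<Omega> v v"
  define n a where "n = real CARD('n)" and "a = 2 * \<bar>\<beta>1\<bar> + \<beta>6"
  have "v \<in> V" and scheme: "l2ip \<Omega> (u' s) v + Aform \<Omega> \<alpha> \<beta>1 \<beta>2 \<beta>3 \<beta>4 \<beta>5 v v v
      - (\<alpha> + \<beta>3) * l2ip \<Omega> v v - \<beta>6 * transport \<Omega> j v v = 0"
    using sol s by (auto simp: semidiscrete_solution_def v_def)
  then have H2n: "H2n \<Omega> v" using assms(3) by (simp add: fe_space_def)
  then have H1: "H1 \<Omega> v" by (simp add: H2n_def H2_def)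
  have "l2ip \<Omega> (u' s) v
      = - \<beta>1 * G - \<beta>2 * L - Bform \<Omega> \<beta>3 \<beta>5 v v v v + \<beta>3 * E + \<beta>6 * transport \<Omega> j v v"
    using scheme by (simp add: Aform_def l2ip_self Cform_self_eq_0 E_def L_def G_def algebra_simps)
  moreover have "\<beta>3 * Q \<le> Bform \<Omega> \<beta>3 \<beta>5 v v v v" using Bform_self_ge[OF \<beta>(2)] by (simp add: Q_def)
  moreover have "\<beta>6 * transport \<Omega> j v v \<le> \<beta>6 * ((G + n * E) / 2)"
    using mult_left_mono[OF transport_self_le[OF assms(1,2) H1] \<beta>(3)] by (simp add: G_def n_def E_def)
  moreover have "- \<beta>1 * G \<le> \<bar>\<beta>1\<bar> * G"
    using mult_right_mono[OF abs_ge_minus_self gradip_self_nonneg] by (simp add: G_def)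
  ultimately have "2 * l2ip \<Omega> (u' s) v \<le> a * G - 2 * \<beta>2 * L - 2 * \<beta>3 * Q + (2 * \<beta>3 + \<beta>6 * n) * E"
    by (simp add: a_def algebra_simps)
  moreover have "a * G \<le> \<beta>2 * L + a * (a + 1) / (2 * \<beta>2) * E"
    using H2n_gradip_self_le[OF H2n, of "\<beta>2 / (a + 1)"] \<beta>
    by (intro absorb_gradient_term) (simp_all add: a_def G_def L_def E_def l2norm_sq_nonneg)
  ultimately show ?thesis
    by (simp add: energy_rate_def v_def[symmetric] E_def L_def Q_def n_def a_def algebra_simps)
qed

lemma semidiscrete_l2norm_sq_derivative:
  assumes "fe_space \<Omega> Th V" and sol: "semidiscrete_solution \<Omega> j \<alpha> \<beta>1 \<beta>2 \<beta>3 \<beta>4 \<beta>5 \<beta>6 T V u u'"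
    and s: "s \<in> {0..T}"
  shows "((\<lambda>s. l2norm_sq \<Omega> (u s)) has_real_derivative 2 * l2ip \<Omega> (u' s) (u s)) (at s within {0..T})"
  using sol s unfolding semidiscrete_solution_def
  by (intro l2norm_sq_has_real_derivative[OF fe_space_finite_dim_L2[OF assms(1)]]) auto


section \<open>Gronwall's argument\<close>

lemma Gronwall_exp_bound:
  fixes E D :: "real \<Rightarrow> real"
  assumes deriv: "\<And>s. s \<in> {0..T} \<Longrightarrow> (E has_real_derivative D s) (at s within {0..T})"
    and growth: "\<And>s. s \<in> {0..T} \<Longrightarrow> D s \<le> K * E s" and t: "t \<in> {0..T}"
  shows "E t \<le> exp (K * t) * E 0"
proof -
  define g where "g s = exp (- (K * s)) * E s" for s
  have "g t \<le> g 0"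
  proof (rule DERIV_nonpos_imp_decreasing_open[of 0 t g])
    show "0 \<le> t" using t by simp
    show "continuous_on {0..t} g"
      using DERIV_continuous_on[of "{0..T}" E D, OF deriv] t unfolding g_def
      by (intro continuous_intros) (auto elim: continuous_on_subset)
    fix x assume x: "0 < x" "x < t"
    then have "(E has_real_derivative D x) (at x)"
      using deriv[of x] at_within_Icc_at[of 0 x T] t by simp
    then have "(g has_real_derivative exp (- (K * x)) * (D x - K * E x)) (at x)"
      unfolding g_def by (auto intro!: derivative_eq_intros simp: algebra_simps)
    moreover have "exp (- (K * x)) * (D x - K * E x) \<le> 0"
      using growth[of x] x t by (simp add: mult_nonneg_nonpos)
    ultimately show "\<exists>y. (g has_real_derivative y) (at x) \<and> y \<le> 0" by blast
  qed
  then have "exp (K * t) * (exp (- (K * t)) * E t) \<le> exp (K * t) * E 0"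
    unfolding g_def by (intro mult_left_mono) simp_all
  then show ?thesis by (simp add: mult.assoc[symmetric] exp_add[symmetric])
qed

lemma integral_le_nonneg_minorant:
  fixes f g :: "'a::euclidean_space \<Rightarrow> real"
  assumes "g integrable_on S" "\<And>x. x \<in> S \<Longrightarrow> 0 \<le> f x" "\<And>x. x \<in> S \<Longrightarrow> f x \<le> g x"
  shows "integral S f \<le> integral S g"
proof (cases "f integrable_on S")
  case True
  then show ?thesis using assms by (intro integral_le) auto
next
  case False
  then show ?thesis
    using assms by (simp add: not_integrable_integral) (meson integral_nonneg order_trans)
qed

text \<open>The dissipated quantities are bounded through \<open>F \<le> K E - E'\<close>, whose integral is
  controlled by the Gronwall bound on \<open>E\<close> and the fundamental theorem of calculus.\<close>

lemma dissipation_integral_bound: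
  fixes E D F :: "real \<Rightarrow> real"
  assumes deriv: "\<And>s. s \<in> {0..T} \<Longrightarrow> (E has_real_derivative D s) (at s within {0..T})"
    and balance: "\<And>s. s \<in> {0..T} \<Longrightarrow> D s + F s \<le> K * E s"
    and "K \<ge> 0" and E: "\<And>s. E s \<ge> 0" and F: "\<And>s. F s \<ge> 0" and t: "t \<in> {0..T}"
  shows "integral {0..t} F \<le> (1 + K * T * exp (K * T)) * E 0"
proof -
  have E_bound: "E s \<le> exp (K * T) * E 0" if "s \<in> {0..t}" for s
  proof -
    have "D s \<le> K * E s" if "s \<in> {0..T}" for s using balance[OF that] F[of s] by linarith
    then have "E s \<le> exp (K * s) * E 0"
      using that t by (intro Gronwall_exp_bound[OF deriv]) auto
    also have "\<dots> \<le> exp (K * T) * E 0"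
      using that t \<open>K \<ge> 0\<close> E[of 0] by (intro mult_right_mono) (auto intro: mult_left_mono)
    finally show ?thesis .
  qed
  have "(D has_integral (E t - E 0)) {0..t}"
    using t deriv DERIV_subset[of E _ _ "{0..T}" "{0..t}"]
    by (intro fundamental_theorem_of_calculus) (auto simp: has_real_derivative_iff_has_vector_derivative[symmetric])
  moreover have E_int: "E integrable_on {0..t}"
    using DERIV_continuous_on[of "{0..T}" E D, OF deriv] t
    by (intro integrable_continuous_interval) (auto elim: continuous_on_subset)
  ultimately have R: "((\<lambda>s. K * E s - D s) has_integral K * integral {0..t} E - (E t - E 0)) {0..t}"
    by (intro has_integral_diff has_integral_mult_right integrable_integral)
  have "integral {0..t} E \<le> integral {0..t} (\<lambda>s. exp (K * T) * E 0)"
    using E_int E_bound by (intro integral_le) auto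
  also have "\<dots> \<le> T * (exp (K * T) * E 0)"
    using t E[of 0] by (simp add: mult_right_mono)
  finally have "K * integral {0..t} E \<le> K * T * exp (K * T) * E 0"
    using \<open>K \<ge> 0\<close> by (simp add: mult_left_mono mult.assoc)
  have "integral {0..t} F \<le> integral {0..t} (\<lambda>s. K * E s - D s)"
    using R t balance F by (intro integral_le_nonneg_minorant) (auto simp: algebra_simps)
  also have "\<dots> = K * integral {0..t} E - (E t - E 0)" using R by (rule integral_unique)
  also have "\<dots> \<le> (1 + K * T * exp (K * T)) * E 0"
    using \<open>K * integral {0..t} E \<le> K * T * exp (K * T) * E 0\<close> E[of t] by (simp add: algebra_simps)
  finally show ?thesis .
qed

lemma energy_estimate:
  fixes E D L Q :: "real \<Rightarrow> real"
  assumes deriv: "\<And>s. s \<in> {0..T} \<Longrightarrow> (E has_real_derivative D s) (at s within {0..T})"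
    and balance: "\<And>s. s \<in> {0..T} \<Longrightarrow> D s + c1 * L s + c2 * Q s \<le> K * E s"
    and "K \<ge> 0" "c1 > 0" "c2 > 0"
    and nonneg: "\<And>s. E s \<ge> 0" "\<And>s. L s \<ge> 0" "\<And>s. Q s \<ge> 0"
    and t: "t \<in> {0..T}"
  shows "E t + integral {0..t} L + integral {0..t} Q
    \<le> (exp (K * T) + (1 + K * T * exp (K * T)) * (1 / c1 + 1 / c2)) * E 0"
proof -
  define Y where "Y = 1 + K * T * exp (K * T)"
  have "D s + c1 * L s \<le> K * E s" and "D s + c2 * Q s \<le> K * E s" and "D s \<le> K * E s"
    if "s \<in> {0..T}" for s
    using balance[OF that] nonneg[of s] assms(4,5) mult_nonneg_nonneg[of c1 "L s"]
      mult_nonneg_nonneg[of c2 "Q s"] by linarith+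
  then have L_bound: "c1 * integral {0..t} L \<le> Y * E 0" and Q_bound: "c2 * integral {0..t} Q \<le> Y * E 0"
    and E_bound: "E t \<le> exp (K * t) * E 0"
    using dissipation_integral_bound[OF deriv _ \<open>K \<ge> 0\<close> nonneg(1) _ t, of "\<lambda>s. c1 * L s"]
      dissipation_integral_bound[OF deriv _ \<open>K \<ge> 0\<close> nonneg(1) _ t, of "\<lambda>s. c2 * Q s"]
      Gronwall_exp_bound[OF deriv _ t] nonneg assms(4,5)
    by (auto simp: Y_def)
  have "exp (K * t) * E 0 \<le> exp (K * T) * E 0"
    using t \<open>K \<ge> 0\<close> nonneg(1)[of 0] by (intro mult_right_mono) (auto intro: mult_left_mono)
  then have "E t \<le> exp (K * T) * E 0" using E_bound by linarith
  moreover have "integral {0..t} L \<le> Y * E 0 / c1"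
    using L_bound assms(4) by (simp add: pos_le_divide_eq mult.commute)
  moreover have "integral {0..t} Q \<le> Y * E 0 / c2"
    using Q_bound assms(5) by (simp add: pos_le_divide_eq mult.commute)
  ultimately have "E t + integral {0..t} L + integral {0..t} Q
      \<le> exp (K * T) * E 0 + Y * E 0 / c1 + Y * E 0 / c2"
    by linarith
  also have "\<dots> = (exp (K * T) + Y * (1 / c1 + 1 / c2)) * E 0"
    by (simp add: algebra_simps)
  finally show ?thesis by (simp add: Y_def)
qed

theorem mainTheorem3:
  fixes \<alpha> \<beta>1 \<beta>2 \<beta>3 \<beta>4 \<beta>5 \<beta>6 T :: real
  assumes "CARD('n) \<in> {1, 2, 3}"
    and "\<beta>2 > 0" and "\<beta>3 > 0" and "\<beta>4 \<ge> 0" and "\<beta>5 \<ge> 0" and "\<beta>6 \<ge> 0"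
    and "\<alpha> > 0" and "\<beta>1 < 0 \<longrightarrow> \<alpha> > \<beta>1\<^sup>2 / \<beta>2"
    and "T > 0"
  shows "\<exists>C::real. \<forall>(\<Omega> :: (real^'n) set) (j :: real^'n \<Rightarrow> real^'n) (\<sigma>::real) (h::real)
            (Th :: (real^'n) set set) (V :: (real^'n \<Rightarrow> real^3) set)
            (u :: real \<Rightarrow> real^'n \<Rightarrow> real^3) (u' :: real \<Rightarrow> real^'n \<Rightarrow> real^3).
     bounded_domain \<Omega> \<and> H2_regular \<Omega> \<and> admissible_field \<Omega> j \<and>
     h > 0 \<and> triangulation \<Omega> Th \<and> meshsize Th = h \<and> shape_regular \<sigma> Th \<and>
     fe_space \<Omega> Th V \<and> semidiscrete_solution \<Omega> j \<alpha> \<beta>1 \<beta>2 \<beta>3 \<beta>4 \<beta>5 \<beta>6 T V u u'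
     \<longrightarrow> (\<forall>t\<in>{0..T}.
            l2norm_sq \<Omega> (u t)
            + integral {0..t} (\<lambda>s. l2norm_sq \<Omega> (lap \<Omega> (u s)))
            + integral {0..t} (\<lambda>s. l4norm_pow4 \<Omega> (u s))
          \<le> C * l2norm_sq \<Omega> (u 0))"
proof -
  define K where "K = energy_rate \<beta>1 \<beta>2 \<beta>3 \<beta>6 (real CARD('n))"
  have "K \<ge> 0" using assms by (simp add: K_def energy_rate_nonneg)
  show ?thesis
  proof (intro exI[of _ "exp (K * T) + (1 + K * T * exp (K * T)) * (1 / \<beta>2 + 1 / (2 * \<beta>3))"]
      allI impI ballI)
    fix \<Omega> :: "(real^'n) set" and j :: "real^'n \<Rightarrow> real^'n" and \<sigma> h :: real
      and Th :: "(real^'n) set set" and V :: "(real^'n \<Rightarrow> real^3) set"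
      and u u' :: "real \<Rightarrow> real^'n \<Rightarrow> real^3" and t :: real
    assume "bounded_domain \<Omega> \<and> H2_regular \<Omega> \<and> admissible_field \<Omega> j \<and> h > 0 \<and>
      triangulation \<Omega> Th \<and> meshsize Th = h \<and> shape_regular \<sigma> Th \<and> fe_space \<Omega> Th V \<and>
      semidiscrete_solution \<Omega> j \<alpha> \<beta>1 \<beta>2 \<beta>3 \<beta>4 \<beta>5 \<beta>6 T V u u'"
      and t: "t \<in> {0..T}"
    then have setting: "open \<Omega>" "admissible_field \<Omega> j" "fe_space \<Omega> Th V"
      "semidiscrete_solution \<Omega> j \<alpha> \<beta>1 \<beta>2 \<beta>3 \<beta>4 \<beta>5 \<beta>6 T V u u'"
      by (auto simp: bounded_domain_def)
    show "l2norm_sq \<Omega> (u t) + integral {0..t} (\<lambda>s. l2norm_sq \<Omega> (lap \<Omega> (u s)))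
        + integral {0..t} (\<lambda>s. l4norm_pow4 \<Omega> (u s))
      \<le> (exp (K * T) + (1 + K * T * exp (K * T)) * (1 / \<beta>2 + 1 / (2 * \<beta>3))) * l2norm_sq \<Omega> (u 0)"
      using semidiscrete_l2norm_sq_derivative[OF setting(3,4)]
        semidiscrete_energy_inequality[OF setting _ assms(2,5,6), folded K_def]
        \<open>K \<ge> 0\<close> assms(2,3) t
      by (intro energy_estimate) (simp_all add: l2norm_sq_nonneg l4norm_pow4_nonneg)
  qed
qed

end
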